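(* Let $\lambda'$ be a Dyck path of length $2(n-1)$ and $\lambda=U\lambda'D$. Then $P_{\lambda,\lambda_0}=P_{\lambda',\lambda_0}$.
   Context: Paths are words in $\{U,D\}$; a Dyck path (word) has equally many $U$ and $D$ and every prefix has at least as many $U$ as $D$. For a Dyck word $\lambda$: match each $U$ with the $D$ closing it; each matched pair is a chord. $A(\lambda)$ is the rooted plane tree with one edge per chord, the edge of chord $c$ hanging directly below the edge of the innermost chord strictly containing $c$, or from the root if none; siblings ordered left to right. Leaf edges are chords whose $U$ is immediately followed by its $D$; the capacity of a leaf edge (with respect to $\lambda_0$, the all-$U$ word of the same length as $\lambda$) is the number of $D$'s of $\lambda$ strictly left of that $U$. A labelling of Lascoux--Sch\"utzenberger type assigns non-negative integers to edges so that each edge's label is at most the labels of the edges directly below it and each leaf edge's label is at most its capacity. $P_{\lambda,\lambda_0}=\sum q^{\text{sum of labels}}$ over these labellings (equal to $1$ for the empty word). *)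

theory Defs
  imports "HOL-Computational_Algebra.Polynomial"
begin

text \<open>Paths are lists of booleans: True = U (up step), False = D (down step).\<close>

definition dyck :: "bool list \<Rightarrow> bool" where
  "dyck w \<longleftrightarrow> count_list w True = count_list w False \<and>
     (\<forall>k \<le> length w. count_list (take k w) False \<le> count_list (take k w) True)"

definition ht :: "bool list \<Rightarrow> nat \<Rightarrow> int" where
  "ht w k = int (count_list (take k w) True) - int (count_list (take k w) False)"

text \<open>Positions of the U steps; each U step is the left end of a chord (= an edge of A(w)).\<close>
definition ups :: "bool list \<Rightarrow> nat set" where
  "ups w = {i. i < length w \<and> w ! i}"

definition mate :: "bool list \<Rightarrow> nat \<Rightarrow> nat" where
  "mate w i = (LEAST j. i < j \<and> j < length w \<and> ht w (Suc j) = ht w i)"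

definition chord_contains :: "bool list \<Rightarrow> nat \<Rightarrow> nat \<Rightarrow> bool" where
  "chord_contains w e c \<longleftrightarrow> e \<in> ups w \<and> c \<in> ups w \<and> e < c \<and> mate w c < mate w e"

text \<open>Edge c hangs directly below edge e in A(w): e is the innermost chord strictly containing c.\<close>
definition child :: "bool list \<Rightarrow> nat \<Rightarrow> nat \<Rightarrow> bool" where
  "child w e c \<longleftrightarrow> chord_contains w e c \<and> \<not> (\<exists>d. chord_contains w e d \<and> chord_contains w d c)"

definition leaf_edge :: "bool list \<Rightarrow> nat \<Rightarrow> bool" where
  "leaf_edge w e \<longleftrightarrow> e \<in> ups w \<and> mate w e = Suc e"

text \<open>Capacity of a leaf edge w.r.t. the all-U word: number of D's strictly left of its U.\<close>
definition capacity :: "bool list \<Rightarrow> nat \<Rightarrow> nat" where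
  "capacity w e = count_list (take e w) False"

text \<open>Labellings of Lascoux--Schuetzenberger type (edges identified with U positions;
  the labelling is extended by 0 outside the edges).\<close>
definition LS_labelling :: "bool list \<Rightarrow> (nat \<Rightarrow> nat) \<Rightarrow> bool" where
  "LS_labelling w f \<longleftrightarrow>
     (\<forall>e c. child w e c \<longrightarrow> f e \<le> f c) \<and>
     (\<forall>e. leaf_edge w e \<longrightarrow> f e \<le> capacity w e) \<and>
     (\<forall>i. i \<notin> ups w \<longrightarrow> f i = 0)"

definition P_LS :: "bool list \<Rightarrow> int poly" where
  "P_LS w = (\<Sum>f \<in> {f. LS_labelling w f}. monom 1 (\<Sum>e \<in> ups w. f e))"

end

theory Submission imports Defs begin

text \<open>Wrapping a Dyck word as \<open>U\<lambda>'D\<close> adds one chord, from the first to the last step, which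
  becomes the new root edge of \<open>A(\<lambda>)\<close> with the old tree hanging below it; chords, the
  child relation, leaf edges and capacities of the old word are just shifted by one position.
  The new root edge is an ancestor of the first leaf edge, the peak ending the initial run of
  \<open>U\<close>'s, whose capacity is \<open>0\<close>; monotonicity along the path down to that leaf forces the root
  label to be \<open>0\<close>. Thus dropping the root label is a weight-preserving bijection between the
  labellings of \<open>U\<lambda>'D\<close> and those of \<open>\<lambda>'\<close>.\<close>

abbreviation wrap :: "bool list \<Rightarrow> bool list" where
  "wrap w \<equiv> True # w @ [False]"

lemma ht_Suc: "k < length w \<Longrightarrow> ht w (Suc k) = ht w k + (if w ! k then 1 else -1)"
  by (simp add: ht_def take_Suc_conv_app_nth)

lemma ht_intermediate_value:
  assumes "a \<le> b" "b \<le> length w" "ht w b \<le> h" "h \<le> ht w a"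
  shows "\<exists>k. a \<le> k \<and> k \<le> b \<and> ht w k = h"
  using assms
proof (induction b rule: dec_induct)
  case base
  then show ?case by auto
next
  case (step b)
  show ?case
  proof (cases "ht w b \<le> h")
    case True
    then show ?thesis using step by force
  next
    case False
    then have "ht w (Suc b) = h" using ht_Suc[of b w] step.prems by (auto split: if_splits)
    then show ?thesis using step by (intro exI[of _ "Suc b"]) auto
  qed
qed

lemma dyck_ht_nonneg: "dyck w \<Longrightarrow> k \<le> length w \<Longrightarrow> 0 \<le> ht w k"
  unfolding dyck_def ht_def by auto

lemma dyck_ht_length: "dyck w \<Longrightarrow> ht w (length w) = 0"
  unfolding dyck_def ht_def by auto

lemma mate_least: "i < j \<Longrightarrow> j < length w \<Longrightarrow> ht w (Suc j) = ht w i \<Longrightarrow> mate w i \<le> j"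
  unfolding mate_def by (rule Least_le) auto

lemma mate_spec:
  assumes "dyck w" "i \<in> ups w"
  shows "i < mate w i \<and> mate w i < length w \<and> ht w (Suc (mate w i)) = ht w i"
proof -
  have i: "i < length w" "w ! i" using assms(2) by (auto simp: ups_def)
  have up: "ht w (Suc i) = ht w i + 1" using ht_Suc[OF i(1)] i(2) by simp
  obtain k where k: "Suc i \<le> k" "k \<le> length w" "ht w k = ht w i"
    using ht_intermediate_value[of "Suc i" "length w" w "ht w i"] i up
      dyck_ht_length[OF assms(1)] dyck_ht_nonneg[OF assms(1), of i] by auto
  then obtain j where "k = Suc j" "j \<noteq> i" using up by (cases k) (auto simp: le_Suc_eq)
  with k have "i < j \<and> j < length w \<and> ht w (Suc j) = ht w i" by auto
  then have "\<exists>j. i < j \<and> j < length w \<and> ht w (Suc j) = ht w i" by blast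
  then show ?thesis unfolding mate_def by (rule LeastI_ex)
qed

lemma child_consecutive_ups:
  assumes "dyck w" "w ! k" "w ! Suc k" "Suc k < length w"
  shows "child w k (Suc k)"
proof -
  have ups: "k \<in> ups w" "Suc k \<in> ups w" using assms by (auto simp: ups_def)
  define m where "m = mate w k"
  have m: "k < m" "m < length w" "ht w (Suc m) = ht w k"
    using mate_spec[OF assms(1) ups(1)] m_def by auto
  have h1: "ht w (Suc k) = ht w k + 1" using ht_Suc[of k w] assms by simp
  have h2: "ht w (Suc (Suc k)) = ht w k + 2" using ht_Suc[of "Suc k" w] assms h1 by simp
  \<comment> \<open>the inner chord closes where the height first returns to \<open>ht w k + 1\<close>, before \<open>m\<close>\<close>
  obtain q where q: "Suc (Suc k) \<le> q" "q \<le> Suc m" "ht w q = ht w k + 1"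
    using ht_intermediate_value[of "Suc (Suc k)" "Suc m" w "ht w k + 1"] m h2 by fastforce
  then obtain j where j: "q = Suc j" "Suc k < j" "j < m"
    using h2 m by (cases q) (auto simp: le_Suc_eq)
  have "mate w (Suc k) \<le> j" using j m q h1 by (intro mate_least) auto
  with j have "mate w (Suc k) < mate w k" by (simp add: m_def)
  then show ?thesis using ups unfolding child_def chord_contains_def by auto
qed

lemma leaf_edge_peak:
  assumes "w ! k" "\<not> w ! Suc k" "Suc k < length w"
  shows "leaf_edge w k"
proof -
  have "ht w (Suc (Suc k)) = ht w k" using ht_Suc[of k w] ht_Suc[of "Suc k" w] assms by simp
  then have "mate w k = Suc k" unfolding mate_def by (intro Least_equality) (use assms in auto)
  then show ?thesis using assms by (auto simp: leaf_edge_def ups_def)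
qed

lemma dyck_first_peak:
  assumes "dyck w" "w \<noteq> []"
  obtains q where "Suc q < length w" "\<forall>m\<le>q. w ! m" "\<not> w ! Suc q"
proof -
  have w0: "w ! 0" using assms unfolding dyck_def
    by (cases w) (auto elim!: allE[of _ 1] split: if_splits)
  have "False \<in> set w"
  proof (rule ccontr)
    assume "False \<notin> set w"
    then have "count_list w False = 0" by (simp add: count_list_0_iff)
    moreover have "count_list w True > 0" using w0 assms(2) by (cases w) auto
    ultimately show False using assms(1) by (simp add: dyck_def)
  qed
  then have ex: "\<exists>p. p < length w \<and> \<not> w ! p" by (metis in_set_conv_nth)
  define p where "p = (LEAST p. p < length w \<and> \<not> w ! p)"
  have p: "p < length w" "\<not> w ! p" using LeastI_ex[OF ex] p_def by auto
  have before: "w ! m" if "m < p" for m using not_less_Least[of m] that p_def p by fastforce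
  obtain q where "p = Suc q" using w0 p by (cases p) auto
  then show thesis using that p before by auto
qed

lemma ht_wrap: "k \<le> length w \<Longrightarrow> ht (wrap w) (Suc k) = 1 + ht w k"
  by (simp add: ht_def)

lemma finite_ups: "finite (ups w)"
  by (simp add: ups_def)

lemma ups_wrap: "ups (wrap w) = insert 0 (Suc ` ups w)"
proof (rule set_eqI)
  fix x show "x \<in> ups (wrap w) \<longleftrightarrow> x \<in> insert 0 (Suc ` ups w)"
    by (cases x) (auto simp: ups_def nth_append)
qed

lemma mate_wrap_0:
  assumes "dyck w"
  shows "mate (wrap w) 0 = Suc (length w)"
  unfolding mate_def
proof (rule Least_equality)
  show "0 < Suc (length w) \<and> Suc (length w) < length (wrap w) \<and>
      ht (wrap w) (Suc (Suc (length w))) = ht (wrap w) 0"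
    using dyck_ht_length[OF assms] by (simp add: ht_def dyck_def)
next
  fix y assume y: "0 < y \<and> y < length (wrap w) \<and> ht (wrap w) (Suc y) = ht (wrap w) 0"
  show "Suc (length w) \<le> y"
  proof (rule ccontr)
    assume "\<not> ?thesis"
    then have "y \<le> length w" by simp
    then show False
      using y ht_wrap[of y w] dyck_ht_nonneg[OF assms, of y] by (simp add: ht_def)
  qed
qed

lemma mate_wrap_Suc:
  assumes d: "dyck w" and i: "i \<in> ups w"
  shows "mate (wrap w) (Suc i) = Suc (mate w i)"
  unfolding mate_def[of "wrap w"]
proof (rule Least_equality)
  have il: "i < length w" using i by (simp add: ups_def)
  show "Suc i < Suc (mate w i) \<and> Suc (mate w i) < length (wrap w) \<and>
      ht (wrap w) (Suc (Suc (mate w i))) = ht (wrap w) (Suc i)"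
    using mate_spec[OF d i] ht_wrap[of "Suc (mate w i)" w] ht_wrap[of i w] il by simp
  fix y assume y: "Suc i < y \<and> y < length (wrap w) \<and> ht (wrap w) (Suc y) = ht (wrap w) (Suc i)"
  have hi: "ht (wrap w) (Suc i) = 1 + ht w i" using ht_wrap[of i w] il by simp
  have "y \<noteq> Suc (length w)"
    using y hi dyck_ht_nonneg[OF d, of i] il dyck_ht_length[OF d] by (auto simp: ht_def dyck_def)
  then obtain j where j: "y = Suc j" "j < length w" using y by (cases y) auto
  have "ht w (Suc j) = ht w i" using y j hi ht_wrap[of "Suc j" w] by simp
  then have "mate w i \<le> j" using j y by (intro mate_least) auto
  then show "Suc (mate w i) \<le> y" using j by simp
qed

lemma chord_contains_wrap_Suc:
  "dyck w \<Longrightarrow> chord_contains (wrap w) (Suc e) (Suc c) \<longleftrightarrow> chord_contains w e c"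
  unfolding chord_contains_def ups_wrap using mate_wrap_Suc by auto

lemma not_chord_contains_0: "\<not> chord_contains w e 0"
  unfolding chord_contains_def by auto

lemma child_wrap_Suc:
  assumes d: "dyck w"
  shows "child (wrap w) (Suc e) (Suc c) \<longleftrightarrow> child w e c"
proof -
  have "(\<exists>x. chord_contains (wrap w) (Suc e) x \<and> chord_contains (wrap w) x (Suc c))
     \<longleftrightarrow> (\<exists>x. chord_contains w e x \<and> chord_contains w x c)"
    by (metis not_chord_contains_0 chord_contains_wrap_Suc[OF d] not0_implies_Suc)
  then show ?thesis unfolding child_def using chord_contains_wrap_Suc[OF d] by simp
qed

lemma not_child_0: "\<not> child w e 0"
  unfolding child_def using not_chord_contains_0 by auto

lemma child_wrap_0_1:
  assumes d: "dyck w" and "w \<noteq> []"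
  shows "child (wrap w) 0 1"
proof -
  obtain q where "Suc q < length w" "\<forall>m\<le>q. w ! m" using dyck_first_peak[OF assms] .
  then have "0 \<in> ups w" by (auto simp: ups_def)
  then show ?thesis
    unfolding child_def chord_contains_def ups_wrap
    using mate_wrap_0[OF d] mate_wrap_Suc[OF d] mate_spec[OF d] assms(2) by auto
qed

lemma leaf_edge_wrap_Suc: "dyck w \<Longrightarrow> leaf_edge (wrap w) (Suc e) \<longleftrightarrow> leaf_edge w e"
  unfolding leaf_edge_def ups_wrap using mate_wrap_Suc by auto

lemma capacity_wrap_Suc: "leaf_edge w e \<Longrightarrow> capacity (wrap w) (Suc e) = capacity w e"
  by (simp add: capacity_def leaf_edge_def ups_def)

lemma LS_labelling_wrap_root:
  assumes d: "dyck w" and f: "LS_labelling (wrap w) f"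
  shows "f 0 = 0"
proof (cases "w = []")
  case True
  then have "leaf_edge (wrap w) 0" using mate_wrap_0[OF d] by (simp add: leaf_edge_def ups_def)
  then have "f 0 \<le> capacity (wrap w) 0" using f by (simp add: LS_labelling_def)
  then show ?thesis by (simp add: capacity_def)
next
  case False
  obtain q where q: "Suc q < length w" "\<forall>m\<le>q. w ! m" "\<not> w ! Suc q"
    using dyck_first_peak[OF d False] .
  have descend: "f 0 \<le> f (Suc m)" if "m \<le> q" for m
    using that
  proof (induction m)
    case 0
    then show ?case using f child_wrap_0_1[OF d False] by (simp add: LS_labelling_def)
  next
    case (Suc m)
    then have "child w m (Suc m)" using q by (intro child_consecutive_ups[OF d]) auto
    then have "f (Suc m) \<le> f (Suc (Suc m))"
      using f child_wrap_Suc[OF d] by (simp add: LS_labelling_def)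
    with Suc show ?case by simp
  qed
  have leaf: "leaf_edge w q" using q by (intro leaf_edge_peak) auto
  then have "f (Suc q) \<le> capacity (wrap w) (Suc q)"
    using f leaf_edge_wrap_Suc[OF d] by (simp add: LS_labelling_def)
  also have "\<dots> = capacity w q" using capacity_wrap_Suc[OF leaf] .
  also have "capacity w q = 0"
    using q unfolding capacity_def count_list_0_iff by (auto simp: in_set_conv_nth)
  finally show ?thesis using descend[of q] by simp
qed

lemma LS_labelling_wrap_iff:
  assumes d: "dyck w"
  shows "LS_labelling (wrap w) f \<longleftrightarrow> f 0 = 0 \<and> LS_labelling w (f \<circ> Suc)"
proof
  assume f: "LS_labelling (wrap w) f"
  have "f (Suc e) \<le> f (Suc c)" if "child w e c" for e c
    using f that child_wrap_Suc[OF d] by (simp add: LS_labelling_def)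
  moreover have "f (Suc e) \<le> capacity w e" if leaf: "leaf_edge w e" for e
  proof -
    have "f (Suc e) \<le> capacity (wrap w) (Suc e)"
      using f leaf leaf_edge_wrap_Suc[OF d] by (simp add: LS_labelling_def)
    then show ?thesis using capacity_wrap_Suc[OF leaf] by simp
  qed
  moreover have "f (Suc i) = 0" if "i \<notin> ups w" for i
    using f that ups_wrap[of w] by (auto simp: LS_labelling_def)
  ultimately show "f 0 = 0 \<and> LS_labelling w (f \<circ> Suc)"
    using LS_labelling_wrap_root[OF d f] by (simp add: LS_labelling_def)
next
  assume f: "f 0 = 0 \<and> LS_labelling w (f \<circ> Suc)"
  show "LS_labelling (wrap w) f"
    unfolding LS_labelling_def
  proof (intro conjI allI impI)
    fix e c assume "child (wrap w) e c"
    then show "f e \<le> f c" using f child_wrap_Suc[OF d] not_child_0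
      by (cases e; cases c) (auto simp: LS_labelling_def)
  next
    fix e assume "leaf_edge (wrap w) e"
    then show "f e \<le> capacity (wrap w) e" using f leaf_edge_wrap_Suc[OF d] capacity_wrap_Suc
      by (cases e) (auto simp: LS_labelling_def)
  next
    fix i assume "i \<notin> ups (wrap w)"
    then show "f i = 0" using f ups_wrap[of w] by (cases i) (auto simp: LS_labelling_def)
  qed
qed

lemma bij_betw_LS_labelling_wrap:
  assumes "dyck w"
  shows "bij_betw (case_nat 0) {g. LS_labelling w g} {f. LS_labelling (wrap w) f}"
proof (rule bij_betw_byWitness[where f' = "\<lambda>f. f \<circ> Suc"])
  have shift: "case_nat 0 g \<circ> Suc = g" for g :: "nat \<Rightarrow> nat" by auto
  then show "\<forall>g\<in>{g. LS_labelling w g}. case_nat 0 g \<circ> Suc = g" by simp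
  show "\<forall>f\<in>{f. LS_labelling (wrap w) f}. case_nat 0 (f \<circ> Suc) = f"
  proof
    fix f assume "f \<in> {f. LS_labelling (wrap w) f}"
    then have "f 0 = 0" using LS_labelling_wrap_iff[OF assms] by simp
    then show "case_nat 0 (f \<circ> Suc) = f" by (intro ext) (simp split: nat.split)
  qed
  show "case_nat 0 ` {g. LS_labelling w g} \<subseteq> {f. LS_labelling (wrap w) f}"
    using LS_labelling_wrap_iff[OF assms] shift by auto
  show "(\<lambda>f. f \<circ> Suc) ` {f. LS_labelling (wrap w) f} \<subseteq> {g. LS_labelling w g}"
    using LS_labelling_wrap_iff[OF assms] by auto
qed

lemma P_LS_wrap:
  assumes "dyck w"
  shows "P_LS (wrap w) = P_LS w"
proof -
  have weight: "(\<Sum>e\<in>ups (wrap w). case_nat 0 g e) = (\<Sum>e\<in>ups w. g e)" for g :: "nat \<Rightarrow> nat"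
    using finite_ups by (simp add: ups_wrap sum.reindex)
  have "P_LS (wrap w) = (\<Sum>g\<in>{g. LS_labelling w g}. monom 1 (\<Sum>e\<in>ups (wrap w). case_nat 0 g e))"
    unfolding P_LS_def by (rule sum.reindex_bij_betw[OF bij_betw_LS_labelling_wrap[OF assms], symmetric])
  also have "\<dots> = P_LS w" unfolding P_LS_def weight ..
  finally show ?thesis .
qed

theorem mainTheorem10:
  fixes lam' :: "bool list" and n :: nat
  assumes "dyck lam'" and "length lam' = 2 * (n - 1)"
  shows "P_LS (True # lam' @ [False]) = P_LS lam'"
  using P_LS_wrap[OF assms(1)] .

end
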